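(* Let $n\ge 1$ and let $\mathcal F,\mathcal G\subset 2^{[n]}$ be down-sets with $|\mathcal F|\le|\mathcal G|$. Then there is a matching in the bipartite Kneser graph $KG(\mathcal F,\mathcal G)$ that covers every vertex of $\mathcal F$; equivalently, there is an injective map $\phi:\mathcal F\to\mathcal G$ such that $A\cap\phi(A)=\emptyset$ for every $A\in\mathcal F$.
   Context: $[n]=\{1,\dots,n\}$ and $2^{[n]}$ is its power set. A family $\mathcal B\subset 2^{[n]}$ is a down-set if $B\in\mathcal B$ and $A\subset B$ imply $A\in\mathcal B$. For families $\mathcal F,\mathcal G$, the bipartite Kneser graph $KG(\mathcal F,\mathcal G)$ has partite sets $\mathcal F$ and $\mathcal G$ (taken as disjoint copies) and edge set $\{(F,G):F\in\mathcal F,\ G\in\mathcal G,\ F\cap G=\emptyset\}$. *)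

theory Defs
  imports Main
begin

definition down_set :: "nat \<Rightarrow> nat set set \<Rightarrow> bool" where
  "down_set n \<B> \<longleftrightarrow> \<B> \<subseteq> Pow {1..n} \<and> (\<forall>B\<in>\<B>. \<forall>A. A \<subseteq> B \<longrightarrow> A \<in> \<B>)"

definition kneser_edge :: "nat set set \<Rightarrow> nat set set \<Rightarrow> nat set \<Rightarrow> nat set \<Rightarrow> bool" where
  "kneser_edge \<F> \<G> A B \<longleftrightarrow> A \<in> \<F> \<and> B \<in> \<G> \<and> A \<inter> B = {}"

end

theory Submission
  imports Defs
begin

text \<open>By Hall's theorem it suffices that every \<open>\<J> \<subseteq> \<F>\<close> has at least \<open>card \<J>\<close> members of
  \<open>\<G>\<close> disjoint from some member of \<open>\<J>\<close>. These are \<open>\<G> \<inter> \<D>\<close>, where \<open>\<D>\<close> is the down-set of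
  complements of the up-set \<open>\<U>\<close> generated by \<open>\<J>\<close>. Kleitman's inequality
  \<open>card \<A> * card \<B> \<le> 2 ^ n * card (\<A> \<inter> \<B>)\<close> for down-sets, and its dual for a down-set
  and an up-set, give
  \<open>2 ^ n * card \<J> \<le> 2 ^ n * card (\<F> \<inter> \<U>) \<le> card \<F> * card \<U>\<close>
  \<open>\<le> card \<G> * card \<D> \<le> 2 ^ n * card (\<G> \<inter> \<D>)\<close>.\<close>

definition is_sdr :: "'i set \<Rightarrow> ('i \<Rightarrow> 'a set) \<Rightarrow> ('i \<Rightarrow> 'a) \<Rightarrow> bool" where
  "is_sdr I S f \<longleftrightarrow> inj_on f I \<and> (\<forall>i\<in>I. f i \<in> S i)"

definition hall_condition :: "'i set \<Rightarrow> ('i \<Rightarrow> 'a set) \<Rightarrow> bool" where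
  "hall_condition I S \<longleftrightarrow> (\<forall>J\<subseteq>I. card J \<le> card (\<Union>(S ` J)))"

lemma hall_condition_subset: "hall_condition I S \<Longrightarrow> K \<subseteq> I \<Longrightarrow> hall_condition K S"
  unfolding hall_condition_def by blast

lemma is_sdr_Un:
  assumes "is_sdr J S f" and "is_sdr K (\<lambda>i. S i - \<Union>(S ` J)) g"
  shows "is_sdr (J \<union> K) S (\<lambda>i. if i \<in> J then f i else g i)"
proof -
  let ?h = "\<lambda>i. if i \<in> J then f i else g i"
  have "inj_on ?h J" "inj_on ?h (K - J)"
    using assms unfolding is_sdr_def inj_on_def by auto
  moreover have "?h ` J \<inter> ?h ` (K - J) = {}"
    using assms unfolding is_sdr_def by fastforce
  moreover have "J - (K - J) = J" "(K - J) - J = K - J"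
    by blast+
  ultimately have "inj_on ?h (J \<union> (K - J))"
    unfolding inj_on_Un by simp
  then show ?thesis
    using assms unfolding is_sdr_def by (auto simp: Un_Diff_cancel)
qed

lemma is_sdr_insert:
  assumes "is_sdr K (\<lambda>i. S i - {x}) g" and "x \<in> S i" and "i \<notin> K"
  shows "is_sdr (insert i K) S (g(i := x))"
  using assms unfolding is_sdr_def by (auto simp: inj_on_def)

text \<open>A family \<open>K\<close> disjoint from the critical \<open>J\<close> loses exactly \<open>card J\<close> of the candidates of
  \<open>K \<union> J\<close>.\<close>
lemma hall_condition_remove_critical:
  assumes "finite I" and fin: "\<forall>i\<in>I. finite (S i)" and hall: "hall_condition I S"
    and "J \<subseteq> I" and critical: "card (\<Union>(S ` J)) \<le> card J"
  shows "hall_condition (I - J) (\<lambda>i. S i - \<Union>(S ` J))"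
  unfolding hall_condition_def
proof (intro allI impI)
  fix K assume K: "K \<subseteq> I - J"
  let ?T = "\<Union>(S ` J)" and ?U = "\<Union>(S ` (K \<union> J))"
  have "finite K" "finite J"
    using K \<open>J \<subseteq> I\<close> \<open>finite I\<close> finite_subset by blast+
  have "card ?T = card J"
    using hall \<open>J \<subseteq> I\<close> critical unfolding hall_condition_def by (simp add: le_antisym)
  have "finite ?T"
    using fin \<open>J \<subseteq> I\<close> \<open>finite J\<close> by auto
  have "\<Union>((\<lambda>i. S i - ?T) ` K) = ?U - ?T" by auto
  then have "card (\<Union>((\<lambda>i. S i - ?T) ` K)) = card ?U - card ?T"
    using \<open>finite ?T\<close> by (simp add: card_Diff_subset)
  moreover have "card (K \<union> J) = card K + card J"
    using K \<open>finite K\<close> \<open>finite J\<close> by (intro card_Un_disjoint) auto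
  moreover have "card (K \<union> J) \<le> card ?U"
    using hall K \<open>J \<subseteq> I\<close> unfolding hall_condition_def by (meson Diff_subset le_sup_iff order_trans)
  ultimately show "card K \<le> card (\<Union>((\<lambda>i. S i - ?T) ` K))"
    using \<open>card ?T = card J\<close> by linarith
qed

lemma hall_condition_remove_point:
  assumes strict: "\<forall>K\<subseteq>I. K \<noteq> {} \<longrightarrow> card K < card (\<Union>(S ` K))"
  shows "hall_condition I (\<lambda>i. S i - {x})"
  unfolding hall_condition_def
proof (intro allI impI)
  fix K assume "K \<subseteq> I"
  show "card K \<le> card (\<Union>((\<lambda>i. S i - {x}) ` K))"
  proof (cases "K = {}")
    case False
    then have "card K < card (\<Union>(S ` K))"
      using strict \<open>K \<subseteq> I\<close> by blast
    moreover have "card (\<Union>(S ` K)) - card {x} \<le> card (\<Union>(S ` K) - {x})"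
      by (rule diff_card_le_card_Diff) simp
    moreover have "\<Union>((\<lambda>i. S i - {x}) ` K) = \<Union>(S ` K) - {x}" by auto
    ultimately show ?thesis by simp
  qed simp
qed

text \<open>Halmos--Vaughan induction: either some nonempty proper
  subfamily is critical, and the two parts are matched separately, or Hall's condition holds
  strictly and any candidate of any single set may be chosen.\<close>
theorem hall_marriage:
  assumes "finite I" and "\<forall>i\<in>I. finite (S i)" and "hall_condition I S"
  shows "\<exists>f. is_sdr I S f"
  using assms
proof (induction "card I" arbitrary: I S rule: less_induct)
  case less
  consider (empty) "I = {}"
    | (critical) J where "J \<subseteq> I" "J \<noteq> {}" "J \<noteq> I" "card (\<Union>(S ` J)) \<le> card J"
    | (strict) "I \<noteq> {}" "\<forall>J\<subseteq>I. J \<noteq> {} \<longrightarrow> J \<noteq> I \<longrightarrow> card J < card (\<Union>(S ` J))"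
    by (meson not_le)
  then show ?case
  proof cases
    case empty
    then show ?thesis by (auto simp: is_sdr_def)
  next
    case critical
    have "finite J"
      using critical(1) less.prems(1) by (rule finite_subset)
    have "card J < card I"
      using critical(1,3) less.prems(1) by (simp add: psubset_card_mono psubset_eq)
    have "I - J \<subset> I"
      using critical(1,2) by blast
    then have "card (I - J) < card I"
      using less.prems(1) by (rule psubset_card_mono[rotated])
    have "hall_condition J S"
      using less.prems(3) critical(1) by (rule hall_condition_subset)
    moreover have "\<forall>i\<in>J. finite (S i)"
      using less.prems(2) critical(1) by blast
    ultimately obtain f where "is_sdr J S f"
      using less.hyps[OF \<open>card J < card I\<close> \<open>finite J\<close>] by metis
    have "hall_condition (I - J) (\<lambda>i. S i - \<Union>(S ` J))"
      using less.prems critical(1,4) by (rule hall_condition_remove_critical)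
    moreover have "finite (I - J)" "\<forall>i\<in>I - J. finite (S i - \<Union>(S ` J))"
      using less.prems(1,2) by simp_all
    ultimately obtain g where "is_sdr (I - J) (\<lambda>i. S i - \<Union>(S ` J)) g"
      using less.hyps[OF \<open>card (I - J) < card I\<close>] by metis
    with \<open>is_sdr J S f\<close> have "is_sdr (J \<union> (I - J)) S (\<lambda>i. if i \<in> J then f i else g i)"
      by (rule is_sdr_Un)
    moreover have "J \<union> (I - J) = I"
      using critical(1) by blast
    ultimately show ?thesis by auto
  next
    case strict
    then obtain i where "i \<in> I" by blast
    have "card {i} \<le> card (\<Union>(S ` {i}))"
      using less.prems(3) \<open>i \<in> I\<close> unfolding hall_condition_def by blast
    then have "S i \<noteq> {}" by auto
    then obtain x where "x \<in> S i" by blast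
    have "hall_condition (I - {i}) (\<lambda>i. S i - {x})"
      using strict(2) \<open>i \<in> I\<close> by (intro hall_condition_remove_point) blast
    moreover have "finite (I - {i})" "\<forall>j\<in>I - {i}. finite (S j - {x})"
      using less.prems(1,2) by simp_all
    ultimately obtain g where "is_sdr (I - {i}) (\<lambda>i. S i - {x}) g"
      using less.hyps[OF card_Diff1_less[OF less.prems(1) \<open>i \<in> I\<close>]] by metis
    then have "is_sdr (insert i (I - {i})) S (g(i := x))"
      using \<open>x \<in> S i\<close> by (rule is_sdr_insert) simp
    then show ?thesis
      using \<open>i \<in> I\<close> by (auto simp: insert_absorb)
  qed
qed

definition deletion :: "'a \<Rightarrow> 'a set set \<Rightarrow> 'a set set" where
  "deletion m \<A> = {X\<in>\<A>. m \<notin> X}"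

definition link :: "'a \<Rightarrow> 'a set set \<Rightarrow> 'a set set" where
  "link m \<A> = {X\<in>\<A>. m \<notin> X \<and> insert m X \<in> \<A>}"

lemma deletion_Int: "deletion m (\<A> \<inter> \<B>) = deletion m \<A> \<inter> deletion m \<B>"
  unfolding deletion_def by blast

lemma link_Int: "link m (\<A> \<inter> \<B>) = link m \<A> \<inter> link m \<B>"
  unfolding link_def by blast

lemma link_subset_deletion: "link m \<A> \<subseteq> deletion m \<A>"
  unfolding link_def deletion_def by blast

lemma down_set_finite: "down_set n \<A> \<Longrightarrow> finite \<A>"
  unfolding down_set_def by (meson finite_Pow_iff finite_atLeastAtMost finite_subset)

lemma down_set_Int: "down_set n \<A> \<Longrightarrow> down_set n \<B> \<Longrightarrow> down_set n (\<A> \<inter> \<B>)"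
  unfolding down_set_def by (metis Int_iff le_infI1)

lemma down_set_deletion:
  assumes "down_set (Suc n) \<A>"
  shows "down_set n (deletion (Suc n) \<A>)"
proof -
  have "deletion (Suc n) \<A> \<subseteq> Pow {1..n}"
  proof
    fix X assume "X \<in> deletion (Suc n) \<A>"
    then have "X \<subseteq> {1..Suc n}" "Suc n \<notin> X"
      using assms unfolding down_set_def deletion_def by auto
    then show "X \<in> Pow {1..n}"
      by (auto simp: subset_iff le_Suc_eq)
  qed
  moreover have "\<forall>B\<in>deletion (Suc n) \<A>. \<forall>A. A \<subseteq> B \<longrightarrow> A \<in> deletion (Suc n) \<A>"
    using assms unfolding down_set_def deletion_def by blast
  ultimately show ?thesis
    unfolding down_set_def by blast
qed

lemma down_set_link:
  assumes "down_set (Suc n) \<A>"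
  shows "down_set n (link (Suc n) \<A>)"
proof -
  have "link (Suc n) \<A> \<subseteq> Pow {1..n}"
    using down_set_deletion[OF assms] link_subset_deletion[of "Suc n" \<A>]
    unfolding down_set_def by blast
  moreover have "\<forall>B\<in>link (Suc n) \<A>. \<forall>A. A \<subseteq> B \<longrightarrow> A \<in> link (Suc n) \<A>"
  proof (intro ballI allI impI)
    fix B A assume "B \<in> link (Suc n) \<A>" "A \<subseteq> B"
    moreover have "insert (Suc n) A \<subseteq> insert (Suc n) B"
      using \<open>A \<subseteq> B\<close> by blast
    ultimately show "A \<in> link (Suc n) \<A>"
      using assms unfolding link_def down_set_def by blast
  qed
  ultimately show ?thesis
    unfolding down_set_def by blast
qed

lemma card_eq_card_deletion_add_card_link:
  assumes "down_set n \<A>"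
  shows "card \<A> = card (deletion m \<A>) + card (link m \<A>)"
proof -
  have "\<A> = deletion m \<A> \<union> insert m ` link m \<A>"
  proof (intro equalityI subsetI)
    fix X assume "X \<in> \<A>"
    show "X \<in> deletion m \<A> \<union> insert m ` link m \<A>"
    proof (cases "m \<in> X")
      case True
      then have "X - {m} \<in> link m \<A>"
        using \<open>X \<in> \<A>\<close> assms unfolding link_def down_set_def by (auto simp: insert_absorb)
      then show ?thesis
        using True by (metis UnI2 image_eqI insert_Diff)
    qed (use \<open>X \<in> \<A>\<close> in \<open>simp add: deletion_def\<close>)
  qed (auto simp: deletion_def link_def)
  moreover have "inj_on (insert m) (link m \<A>)"
    unfolding inj_on_def link_def by (metis insert_ident mem_Collect_eq)
  moreover have "finite (deletion m \<A>)" "finite (link m \<A>)"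
    using down_set_finite[OF assms] unfolding deletion_def link_def by simp_all
  moreover have "deletion m \<A> \<inter> insert m ` link m \<A> = {}"
    unfolding deletion_def by blast
  ultimately show ?thesis
    by (metis card_Un_disjoint card_image finite_imageI)
qed

lemma add_mult_add_le_twice_similarly_ordered:
  fixes a0 a1 b0 b1 :: nat
  assumes "a1 \<le> a0" and "b1 \<le> b0"
  shows "(a0 + a1) * (b0 + b1) \<le> 2 * (a0 * b0 + a1 * b1)"
proof -
  obtain p q where "a0 = a1 + p" and "b0 = b1 + q"
    using assms le_Suc_ex by metis
  then show ?thesis by (simp add: algebra_simps)
qed

text \<open>Induction on \<open>n\<close>: split both down-sets at the element \<open>n + 1\<close>; since the link lies in
  the deletion, Chebyshev's sum inequality combines the two induction hypotheses.\<close>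
theorem kleitman_down_sets:
  "down_set n \<A> \<Longrightarrow> down_set n \<B> \<Longrightarrow> card \<A> * card \<B> \<le> 2 ^ n * card (\<A> \<inter> \<B>)"
proof (induction n arbitrary: \<A> \<B>)
  case 0
  then have "\<A> \<subseteq> {{}}" "\<B> \<subseteq> {{}}"
    unfolding down_set_def by auto
  then show ?case by (auto simp: subset_singleton_iff)
next
  case (Suc n)
  let ?d = "deletion (Suc n)" and ?l = "link (Suc n)"
  have "card (?l \<A>) \<le> card (?d \<A>)" "card (?l \<B>) \<le> card (?d \<B>)"
    using Suc.prems[THEN down_set_deletion, THEN down_set_finite]
    by (simp_all add: card_mono link_subset_deletion)
  then have "card \<A> * card \<B> \<le> 2 * (card (?d \<A>) * card (?d \<B>) + card (?l \<A>) * card (?l \<B>))"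
    unfolding card_eq_card_deletion_add_card_link[OF Suc.prems(1), of "Suc n"]
      card_eq_card_deletion_add_card_link[OF Suc.prems(2), of "Suc n"]
    by (rule add_mult_add_le_twice_similarly_ordered)
  also have "\<dots> \<le> 2 * (2 ^ n * card (?d \<A> \<inter> ?d \<B>) + 2 ^ n * card (?l \<A> \<inter> ?l \<B>))"
    using add_mono[OF Suc.IH[OF Suc.prems[THEN down_set_deletion]] Suc.IH[OF Suc.prems[THEN down_set_link]]]
    by simp
  also have "\<dots> = 2 ^ Suc n * (card (?d \<A> \<inter> ?d \<B>) + card (?l \<A> \<inter> ?l \<B>))"
    by (simp add: algebra_simps)
  also have "\<dots> = 2 ^ Suc n * card (\<A> \<inter> \<B>)"
    using card_eq_card_deletion_add_card_link[OF down_set_Int[OF Suc.prems], of "Suc n"]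
    by (simp add: deletion_Int link_Int)
  finally show ?case .
qed

definition up_set :: "nat \<Rightarrow> nat set set \<Rightarrow> bool" where
  "up_set n \<U> \<longleftrightarrow> \<U> \<subseteq> Pow {1..n} \<and> (\<forall>A\<in>\<U>. \<forall>B. A \<subseteq> B \<and> B \<subseteq> {1..n} \<longrightarrow> B \<in> \<U>)"

lemma down_set_subset_Pow: "down_set n \<A> \<Longrightarrow> \<A> \<subseteq> Pow {1..n}"
  unfolding down_set_def by simp

lemma up_set_subset_Pow: "up_set n \<U> \<Longrightarrow> \<U> \<subseteq> Pow {1..n}"
  unfolding up_set_def by simp

lemma down_set_Pow_Diff_up_set:
  assumes "up_set n \<U>"
  shows "down_set n (Pow {1..n} - \<U>)"
  unfolding down_set_def
proof (intro conjI ballI allI impI)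
  fix B A assume B: "B \<in> Pow {1..n} - \<U>" and "A \<subseteq> B"
  have "A \<notin> \<U>"
  proof
    assume "A \<in> \<U>"
    moreover have "B \<subseteq> {1..n}"
      using B by simp
    ultimately have "B \<in> \<U>"
      using assms \<open>A \<subseteq> B\<close> unfolding up_set_def by blast
    with B show False by simp
  qed
  with B \<open>A \<subseteq> B\<close> show "A \<in> Pow {1..n} - \<U>"
    by auto
qed simp

lemma down_set_image_complement:
  assumes "up_set n \<U>"
  shows "down_set n ((\<lambda>X. {1..n} - X) ` \<U>)"
  unfolding down_set_def
proof (intro conjI ballI allI impI)
  fix B A assume "B \<in> (\<lambda>X. {1..n} - X) ` \<U>" "A \<subseteq> B"
  then obtain Y where "Y \<in> \<U>" "A \<subseteq> {1..n} - Y"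
    by auto
  moreover have "Y \<subseteq> {1..n} - A"
    using \<open>Y \<in> \<U>\<close> \<open>A \<subseteq> {1..n} - Y\<close> assms unfolding up_set_def by auto
  ultimately have "{1..n} - A \<in> \<U>"
    using assms unfolding up_set_def by simp
  moreover have "A = {1..n} - ({1..n} - A)"
    using \<open>A \<subseteq> {1..n} - Y\<close> by auto
  ultimately show "A \<in> (\<lambda>X. {1..n} - X) ` \<U>"
    by (rule rev_image_eqI)
qed auto

lemma card_image_complement:
  assumes "\<U> \<subseteq> Pow {1..n}"
  shows "card ((\<lambda>X. {1..n} - X) ` \<U>) = card \<U>"
proof (rule card_image)
  show "inj_on (\<lambda>X. {1..n} - X) \<U>"
    by (rule inj_on_inverseI[where g = "\<lambda>X. {1..n} - X"]) (use assms in auto)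
qed

text \<open>Kleitman's inequality for \<open>\<A>\<close> and the down-set \<open>Pow {1..n} - \<U>\<close>.\<close>
theorem kleitman_down_up:
  assumes "down_set n \<A>" and "up_set n \<U>"
  shows "2 ^ n * card (\<A> \<inter> \<U>) \<le> card \<A> * card \<U>"
proof -
  let ?C = "Pow {1..n} - \<U>"
  define a b u r where "a = card (\<A> \<inter> \<U>)" and "b = card (\<A> - \<U>)"
    and "u = card \<U>" and "r = card ?C"
  have "\<U> \<subseteq> Pow {1..n}" "\<A> \<subseteq> Pow {1..n}"
    by (rule up_set_subset_Pow[OF assms(2)] down_set_subset_Pow[OF assms(1)])+
  have "finite \<U>"
    using \<open>\<U> \<subseteq> Pow {1..n}\<close> finite_subset by blast
  have "r = 2 ^ n - u"
    using card_Diff_subset[OF \<open>finite \<U>\<close> \<open>\<U> \<subseteq> Pow {1..n}\<close>] unfolding r_def u_def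
    by (simp add: card_Pow)
  moreover have "u \<le> 2 ^ n"
    using card_mono[OF _ \<open>\<U> \<subseteq> Pow {1..n}\<close>] unfolding u_def by (simp add: card_Pow)
  ultimately have "2 ^ n = u + r"
    by simp
  have "card \<A> = a + b"
    using card_Int_Diff[OF down_set_finite[OF assms(1)]] unfolding a_def b_def .
  moreover have "\<A> \<inter> ?C = \<A> - \<U>"
    using \<open>\<A> \<subseteq> Pow {1..n}\<close> by blast
  ultimately have "(a + b) * r \<le> (u + r) * b"
    using kleitman_down_sets[OF assms(1) down_set_Pow_Diff_up_set[OF assms(2)]]
    unfolding b_def r_def \<open>2 ^ n = u + r\<close> by simp
  then have "a * r \<le> u * b"
    by (simp add: algebra_simps)
  have "2 ^ n * a = u * a + a * r"
    unfolding \<open>2 ^ n = u + r\<close> by (simp add: algebra_simps)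
  also have "\<dots> \<le> u * a + u * b"
    using \<open>a * r \<le> u * b\<close> by simp
  also have "\<dots> = card \<A> * u"
    unfolding \<open>card \<A> = a + b\<close> by (simp add: algebra_simps)
  finally show ?thesis
    unfolding a_def u_def .
qed

definition up_closure :: "nat \<Rightarrow> nat set set \<Rightarrow> nat set set" where
  "up_closure n \<J> = {X. X \<subseteq> {1..n} \<and> (\<exists>A\<in>\<J>. A \<subseteq> X)}"

lemma up_set_up_closure: "up_set n (up_closure n \<J>)"
  unfolding up_set_def
proof (intro conjI ballI allI impI)
  fix X Y assume "X \<in> up_closure n \<J>" and Y: "X \<subseteq> Y \<and> Y \<subseteq> {1..n}"
  then obtain A where "A \<in> \<J>" "A \<subseteq> X"
    unfolding up_closure_def by blast
  with Y show "Y \<in> up_closure n \<J>"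
    unfolding up_closure_def by blast
qed (auto simp: up_closure_def)

lemma subset_up_closure: "\<J> \<subseteq> Pow {1..n} \<Longrightarrow> \<J> \<subseteq> up_closure n \<J>"
  unfolding up_closure_def by blast

lemma disjoint_neighbours_eq_image_complement_up_closure:
  assumes "\<J> \<subseteq> Pow {1..n}" and "\<G> \<subseteq> Pow {1..n}"
  shows "{B\<in>\<G>. \<exists>A\<in>\<J>. A \<inter> B = {}} = \<G> \<inter> (\<lambda>X. {1..n} - X) ` up_closure n \<J>"
proof (intro equalityI subsetI)
  fix B assume "B \<in> {B\<in>\<G>. \<exists>A\<in>\<J>. A \<inter> B = {}}"
  then obtain A where "B \<in> \<G>" "A \<in> \<J>" "A \<inter> B = {}"
    by blast
  then have "A \<subseteq> {1..n} - B" "B \<subseteq> {1..n}"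
    using assms by auto
  then have "{1..n} - B \<in> up_closure n \<J>" and "B = {1..n} - ({1..n} - B)"
    unfolding up_closure_def using \<open>A \<in> \<J>\<close> by auto
  with \<open>B \<in> \<G>\<close> show "B \<in> \<G> \<inter> (\<lambda>X. {1..n} - X) ` up_closure n \<J>"
    by blast
next
  fix B assume "B \<in> \<G> \<inter> (\<lambda>X. {1..n} - X) ` up_closure n \<J>"
  then obtain X A where "B \<in> \<G>" "B = {1..n} - X" "A \<in> \<J>" "A \<subseteq> X"
    unfolding up_closure_def by blast
  then show "B \<in> {B\<in>\<G>. \<exists>A\<in>\<J>. A \<inter> B = {}}"
    by blast
qed

lemma hall_condition_disjoint_neighbours:
  assumes F: "down_set n \<F>" and G: "down_set n \<G>" and "card \<F> \<le> card \<G>"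
  shows "hall_condition \<F> (\<lambda>A. {B\<in>\<G>. A \<inter> B = {}})"
  unfolding hall_condition_def
proof (intro allI impI)
  fix \<J> assume "\<J> \<subseteq> \<F>"
  let ?U = "up_closure n \<J>"
  let ?D = "(\<lambda>X. {1..n} - X) ` ?U"
  have "\<J> \<subseteq> Pow {1..n}"
    using \<open>\<J> \<subseteq> \<F>\<close> down_set_subset_Pow[OF F] by (rule order_trans)
  then have "\<J> \<subseteq> \<F> \<inter> ?U"
    using \<open>\<J> \<subseteq> \<F>\<close> subset_up_closure by blast
  have "\<Union>((\<lambda>A. {B\<in>\<G>. A \<inter> B = {}}) ` \<J>) = \<G> \<inter> ?D"
    using disjoint_neighbours_eq_image_complement_up_closure[OF \<open>\<J> \<subseteq> Pow {1..n}\<close>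
        down_set_subset_Pow[OF G]] by blast
  have "2 ^ n * card \<J> \<le> 2 ^ n * card (\<F> \<inter> ?U)"
    using \<open>\<J> \<subseteq> \<F> \<inter> ?U\<close> down_set_finite[OF F] by (simp add: card_mono)
  also have "\<dots> \<le> card \<F> * card ?U"
    using F up_set_up_closure by (rule kleitman_down_up)
  also have "\<dots> \<le> card \<G> * card ?D"
    using \<open>card \<F> \<le> card \<G>\<close> card_image_complement[OF up_set_subset_Pow[OF up_set_up_closure]]
    by simp
  also have "\<dots> \<le> 2 ^ n * card (\<G> \<inter> ?D)"
    using G down_set_image_complement[OF up_set_up_closure] by (rule kleitman_down_sets)
  finally show "card \<J> \<le> card (\<Union>((\<lambda>A. {B\<in>\<G>. A \<inter> B = {}}) ` \<J>))"
    unfolding \<open>\<Union>((\<lambda>A. {B\<in>\<G>. A \<inter> B = {}}) ` \<J>) = \<G> \<inter> ?D\<close> by simp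
qed

theorem theorem1p5:
  fixes n :: nat and \<F> \<G> :: "nat set set"
  assumes "n \<ge> 1"
    and "down_set n \<F>" and "down_set n \<G>"
    and "card \<F> \<le> card \<G>"
  shows "\<exists>\<phi>. inj_on \<phi> \<F> \<and> (\<forall>A\<in>\<F>. kneser_edge \<F> \<G> A (\<phi> A))"
proof -
  have "finite \<F>"
    using assms(2) by (rule down_set_finite)
  moreover have "\<forall>A\<in>\<F>. finite {B\<in>\<G>. A \<inter> B = {}}"
    using down_set_finite[OF assms(3)] by simp
  ultimately obtain \<phi> where "is_sdr \<F> (\<lambda>A. {B\<in>\<G>. A \<inter> B = {}}) \<phi>"
    using hall_marriage[OF _ _ hall_condition_disjoint_neighbours[OF assms(2-4)]] by blast
  then have "inj_on \<phi> \<F> \<and> (\<forall>A\<in>\<F>. kneser_edge \<F> \<G> A (\<phi> A))"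
    unfolding is_sdr_def kneser_edge_def by simp
  then show ?thesis
    by blast
qed

end
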